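(* Let $q$ be a prime power, let $\gamma\in\mathbb{F}_q^*$ have multiplicative order $l$, and let $D=\langle\gamma\rangle=\{1,\gamma,\dots,\gamma^{l-1}\}$. Let $G=\mathbb{F}_q\rtimes\mathbb{Z}_l$ be the group on the set $\mathbb{F}_q\times\mathbb{Z}_l$ with multiplication $(x,i)(y,j)=(x+\gamma^i y,\ i+j)$. Let $D'\subseteq\mathbb{F}_q$ satisfy $dD'=D'$ for all $d\in D$, let $u\in\mathbb{F}_q^*$, let $S=\{-u+x: x\in D'\}$, $s=|S|$, and $E=\{(x,i): x\in S,\ i\in\mathbb{Z}_l\}\subseteq G$. Suppose $0\notin S$ and that there are integers $\alpha,\beta$ such that for every $y\in\mathbb{F}_q$, $$\#\{(x,d)\in D'\times D:\ x-ud=y\}=\beta+\alpha\,[y=0]$$ (equivalently, in the group ring $\mathbb{Z}[(\mathbb{F}_q,+)]$, $\underline{D'}\,\underline{uD}^{-1}=\alpha\mathbf{1}+\beta\,\underline{\mathbb{F}_q}$). Then the Cayley digraph $\mathrm{Cay}(G,E)$ is a directed strongly regular graph with parameters $(lq,\ ls,\ \beta s,\ \beta s+\alpha,\ \beta s)$.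
   Context: For a group $G$ and $E\subseteq G$ not containing the identity, the Cayley digraph $\mathrm{Cay}(G,E)$ has vertex set $G$ and an arc $g\to h$ iff $g^{-1}h\in E$. $[y=0]$ is $1$ if $y=0$ and $0$ otherwise. In the group ring notation, $\underline{X}=\sum_{x\in X}x$ and $\underline{X}^{-1}=\sum_{x\in X}x^{-1}$ (here the group is additive, so $x^{-1}=-x$). A directed strongly regular graph with parameters $(v,k,t,\lambda,\mu)$ is a digraph (no loops, no multiple arcs) on $v$ vertices whose adjacency matrix $A$ satisfies $A^2=tI+\lambda A+\mu(J-I-A)$ and $AJ=JA=kJ$. *)

theory Defs
  imports "HOL-Algebra.Group"
begin

definition mult_ord :: "'a::field \<Rightarrow> nat" where
  "mult_ord g = (LEAST n. 0 < n \<and> g ^ n = 1)"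

definition semidirect :: "'a::field \<Rightarrow> nat \<Rightarrow> ('a \<times> nat) monoid" where
  "semidirect g l = \<lparr> carrier = (UNIV :: 'a set) \<times> {0..<l},
     mult = (\<lambda>(x,i) (y,j). (x + g ^ i * y, (i + j) mod l)),
     one = (0, 0) \<rparr>"

definition cayley_arc :: "('b, 'c) monoid_scheme \<Rightarrow> 'b set \<Rightarrow> 'b \<Rightarrow> 'b \<Rightarrow> bool" where
  "cayley_arc G E a b \<longleftrightarrow> inv\<^bsub>G\<^esub> a \<otimes>\<^bsub>G\<^esub> b \<in> E"

text \<open>Directed strongly regular graph with parameters (v,k,t,lambda,mu) on vertex set V,
  arc relation A (simple digraph: no loops; multiple arcs impossible for a relation).
  A^2 = tI + lambda A + mu (J - I - A) entrywise, and AJ = JA = kJ.\<close>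
definition dsrg :: "'v set \<Rightarrow> ('v \<Rightarrow> 'v \<Rightarrow> bool) \<Rightarrow> int \<Rightarrow> int \<Rightarrow> int \<Rightarrow> int \<Rightarrow> int \<Rightarrow> bool" where
  "dsrg V A v k t lam mu \<longleftrightarrow>
     finite V \<and> int (card V) = v \<and>
     (\<forall>x\<in>V. \<not> A x x) \<and>
     (\<forall>x\<in>V. int (card {y\<in>V. A x y}) = k) \<and>
     (\<forall>y\<in>V. int (card {x\<in>V. A x y}) = k) \<and>
     (\<forall>x\<in>V. \<forall>y\<in>V. int (card {z\<in>V. A x z \<and> A z y}) =
        (if x = y then t else if A x y then lam else mu))"

end

theory Submission
  imports Defs
begin

text \<open>
  In any Cayley digraph the directed 2-paths from \<open>a\<close> to \<open>b\<close> correspond to the factorisations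
  \<open>a\<inverse>b = e e'\<close> with \<open>e, e' \<in> E\<close>, so it suffices to count such factorisations of each group
  element. In \<open>F\<^sub>q \<rtimes> Z\<^sub>l\<close> with \<open>E = S \<times> Z\<^sub>l\<close>, a product \<open>(s, i)(s', j)\<close> equals \<open>(w, k)\<close> iff
  \<open>s + \<gamma>\<^sup>i s' = w\<close> and \<open>j\<close> is the one residue with \<open>i + j = k\<close>; hence the count is the number of
  \<open>(s, s', d) \<in> S \<times> S \<times> D\<close> with \<open>s + d s' = w\<close>. The substitution \<open>x' = d (s' + u)\<close>, which stays
  in \<open>D'\<close> because \<open>D'\<close> is \<open>D\<close>-invariant, turns this into
  \<open>\<Sum>x'\<in>D'. #{(x, d) \<in> D' \<times> D. x - u d = w + u - x'} = \<beta> |S| + \<alpha> [w \<in> S]\<close>.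
\<close>

lemma (in group) inv_mult_cancel_left [simp]:
  "x \<in> carrier G \<Longrightarrow> y \<in> carrier G \<Longrightarrow> inv x \<otimes> (x \<otimes> y) = y"
  "x \<in> carrier G \<Longrightarrow> y \<in> carrier G \<Longrightarrow> x \<otimes> (inv x \<otimes> y) = y"
  by (simp_all add: m_assoc[symmetric])

lemma (in group) cayley_out_neighbours:
  assumes "E \<subseteq> carrier G" "x \<in> carrier G"
  shows "{y \<in> carrier G. cayley_arc G E x y} = (\<lambda>e. x \<otimes> e) ` E"
  using assms by (force simp: cayley_arc_def image_iff)

lemma (in group) cayley_in_neighbours:
  assumes "E \<subseteq> carrier G" "y \<in> carrier G"
  shows "{x \<in> carrier G. cayley_arc G E x y} = (\<lambda>e. y \<otimes> inv e) ` E"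
proof -
  have "inv (y \<otimes> inv e) \<otimes> y = e" if "e \<in> carrier G" for e
    using that assms by (simp add: inv_mult_group m_assoc)
  moreover have "x = y \<otimes> inv (inv x \<otimes> y)" if "x \<in> carrier G" for x
    using that assms by (simp add: inv_mult_group m_assoc[symmetric])
  ultimately show ?thesis
    using assms by (auto simp: cayley_arc_def image_iff)
qed

lemma (in group) card_cayley_two_paths:
  assumes E: "E \<subseteq> carrier G" and x: "x \<in> carrier G" and y: "y \<in> carrier G"
  shows "card {z \<in> carrier G. cayley_arc G E x z \<and> cayley_arc G E z y}
       = card {(e, e') \<in> E \<times> E. e \<otimes> e' = inv x \<otimes> y}"
proof (rule bij_betw_same_card)
  have second_factor: "inv (x \<otimes> e) \<otimes> y = e'"
    if "e \<in> E" "e' \<in> E" "e \<otimes> e' = inv x \<otimes> y" for e e'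
  proof -
    have "inv (x \<otimes> e) \<otimes> y = inv e \<otimes> (inv x \<otimes> y)"
      using that E x y by (simp add: inv_mult_group m_assoc subsetD)
    also have "\<dots> = e'" using that E by (simp add: subsetD flip: that(3))
    finally show ?thesis .
  qed
  have product: "inv x \<otimes> z \<otimes> (inv z \<otimes> y) = inv x \<otimes> y" if "z \<in> carrier G" for z
    using that x y by (simp add: m_assoc)
  show "bij_betw (\<lambda>z. (inv x \<otimes> z, inv z \<otimes> y))
      {z \<in> carrier G. cayley_arc G E x z \<and> cayley_arc G E z y} {(e, e') \<in> E \<times> E. e \<otimes> e' = inv x \<otimes> y}"
    by (rule bij_betw_byWitness[where f' = "\<lambda>(e, e'). x \<otimes> e"])
      (use E x y second_factor product in \<open>auto simp: cayley_arc_def subsetD\<close>)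
qed

lemma (in group) dsrg_cayley_digraph:
  assumes fin: "finite (carrier G)" and E: "E \<subseteq> carrier G" and one: "\<one> \<notin> E"
    and products: "\<And>g. g \<in> carrier G \<Longrightarrow>
      int (card {(e, e') \<in> E \<times> E. e \<otimes> e' = g}) = (if g = \<one> then t else if g \<in> E then lam else mu)"
  shows "dsrg (carrier G) (cayley_arc G E) (int (card (carrier G))) (int (card E)) t lam mu"
  unfolding dsrg_def
proof (intro conjI ballI)
  show "\<not> cayley_arc G E x x" if "x \<in> carrier G" for x
    using that one by (simp add: cayley_arc_def)
  show "int (card {y \<in> carrier G. cayley_arc G E x y}) = int (card E)" if x: "x \<in> carrier G" for x
  proof -
    have "inj_on (\<lambda>e. x \<otimes> e) E"
      using E x by (auto intro: inj_onI simp: subsetD)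
    then show ?thesis by (simp add: cayley_out_neighbours[OF E x] card_image)
  qed
  show "int (card {x \<in> carrier G. cayley_arc G E x y}) = int (card E)" if y: "y \<in> carrier G" for y
  proof -
    have "inj_on (\<lambda>e. y \<otimes> inv e) E"
    proof (rule inj_onI)
      fix e e' assume "e \<in> E" "e' \<in> E" "y \<otimes> inv e = y \<otimes> inv e'"
      then show "e = e'"
        using E y inv_inj by (auto simp: subsetD inj_on_def)
    qed
    then show ?thesis by (simp add: cayley_in_neighbours[OF E y] card_image)
  qed
  show "int (card {z \<in> carrier G. cayley_arc G E x z \<and> cayley_arc G E z y})
      = (if x = y then t else if cayley_arc G E x y then lam else mu)"
    if x: "x \<in> carrier G" and y: "y \<in> carrier G" for x y
  proof -
    have "inv x \<otimes> y = \<one> \<longleftrightarrow> x = y"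
      using x y by (metis inv_solve_left' one_closed r_one)
    moreover have "int (card {z \<in> carrier G. cayley_arc G E x z \<and> cayley_arc G E z y})
        = (if inv x \<otimes> y = \<one> then t else if inv x \<otimes> y \<in> E then lam else mu)"
      using products[of "inv x \<otimes> y"] x y by (simp add: card_cayley_two_paths[OF E x y])
    ultimately show ?thesis by (simp add: cayley_arc_def)
  qed
qed (use fin in auto)

lemma power_mod_exponent:
  fixes \<gamma> :: "'a::monoid_mult"
  assumes "\<gamma> ^ l = 1"
  shows "\<gamma> ^ (n mod l) = \<gamma> ^ n"
proof -
  have "\<gamma> ^ n = (\<gamma> ^ l) ^ (n div l) * \<gamma> ^ (n mod l)"
    by (metis div_mult_mod_eq power_add power_mult mult.commute)
  then show ?thesis using assms by simp
qed

lemma add_mod_eq_iff: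
  fixes i j k l :: nat
  assumes "i < l" "j < l" "k < l"
  shows "(i + j) mod l = k \<longleftrightarrow> j = (k + (l - i)) mod l"
proof
  assume "(i + j) mod l = k"
  then have "(k + (l - i)) mod l = (i + j + (l - i)) mod l"
    by (metis mod_add_left_eq)
  also have "\<dots> = j"
    using assms by simp
  finally show "j = (k + (l - i)) mod l" by simp
next
  assume "j = (k + (l - i)) mod l"
  then have "(i + j) mod l = (i + (k + (l - i))) mod l"
    by (simp add: mod_add_right_eq)
  also have "\<dots> = k"
    using assms by simp
  finally show "(i + j) mod l = k" .
qed

lemma ex_power_eq_one:
  fixes \<gamma> :: "'a::{finite, field}"
  assumes "\<gamma> \<noteq> 0"
  shows "\<exists>n>0. \<gamma> ^ n = 1"
proof -
  have "\<not> inj (\<lambda>n::nat. \<gamma> ^ n)"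
    using finite_imageD[of "\<lambda>n::nat. \<gamma> ^ n" UNIV] by auto
  then obtain m n :: nat where "m < n" and eq: "\<gamma> ^ m = \<gamma> ^ n"
    unfolding inj_def by (metis linorder_neqE_nat)
  have "\<gamma> ^ m * \<gamma> ^ (n - m) = \<gamma> ^ n"
    using \<open>m < n\<close> by (simp flip: power_add)
  then have "\<gamma> ^ m * \<gamma> ^ (n - m) = \<gamma> ^ m * 1"
    using eq by simp
  then show ?thesis
    using assms \<open>m < n\<close> by (intro exI[of _ "n - m"]) auto
qed

lemma
  fixes \<gamma> :: "'a::{finite, field}"
  assumes "\<gamma> \<noteq> 0"
  shows mult_ord_pos: "0 < mult_ord \<gamma>"
    and power_mult_ord: "\<gamma> ^ mult_ord \<gamma> = 1"
  using LeastI_ex[OF ex_power_eq_one[OF assms]] by (simp_all add: mult_ord_def)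

lemma inj_on_power_mult_ord:
  fixes \<gamma> :: "'a::{finite, field}"
  assumes "\<gamma> \<noteq> 0"
  shows "inj_on (\<lambda>i. \<gamma> ^ i) {0..<mult_ord \<gamma>}"
proof (rule linorder_inj_onI')
  fix i j assume "i \<in> {0..<mult_ord \<gamma>}" "j \<in> {0..<mult_ord \<gamma>}" "i < j"
  then have "0 < j - i" "j - i < mult_ord \<gamma>" by auto
  then have "\<gamma> ^ (j - i) \<noteq> 1"
    unfolding mult_ord_def by (metis (mono_tags, lifting) not_less_Least)
  then have "\<gamma> ^ i * \<gamma> ^ (j - i) \<noteq> \<gamma> ^ i * 1"
    using assms by simp
  then show "\<gamma> ^ i \<noteq> \<gamma> ^ j"
    using \<open>i < j\<close> by (simp flip: power_add)
qed

lemma carrier_semidirect [simp]: "carrier (semidirect \<gamma> l) = UNIV \<times> {0..<l}"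
  by (simp add: semidirect_def)

lemma semidirect_mult [simp]:
  "(a, i) \<otimes>\<^bsub>semidirect \<gamma> l\<^esub> (b, j) = (a + \<gamma> ^ i * b, (i + j) mod l)"
  by (simp add: semidirect_def)

lemma semidirect_one [simp]: "\<one>\<^bsub>semidirect \<gamma> l\<^esub> = (0, 0)"
  by (simp add: semidirect_def)

lemma semidirect_group:
  fixes \<gamma> :: "'a::field"
  assumes "\<gamma> ^ l = 1" "0 < l"
  shows "group (semidirect \<gamma> l)"
proof (rule groupI)
  fix x y z assume "x \<in> carrier (semidirect \<gamma> l)" "y \<in> carrier (semidirect \<gamma> l)"
    "z \<in> carrier (semidirect \<gamma> l)"
  then obtain a i b j c k where "x = (a, i)" "y = (b, j)" "z = (c, k)"
    by (metis prod.exhaust)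
  moreover have "\<gamma> ^ ((i + j) mod l) = \<gamma> ^ i * \<gamma> ^ j"
    using power_mod_exponent[OF assms(1)] by (simp add: power_add)
  moreover have "((i + j) mod l + k) mod l = (i + (j + k) mod l) mod l"
    by (simp add: mod_add_left_eq mod_add_right_eq add.assoc)
  ultimately show "x \<otimes>\<^bsub>semidirect \<gamma> l\<^esub> y \<otimes>\<^bsub>semidirect \<gamma> l\<^esub> z
      = x \<otimes>\<^bsub>semidirect \<gamma> l\<^esub> (y \<otimes>\<^bsub>semidirect \<gamma> l\<^esub> z)"
    by (simp add: algebra_simps)
next
  fix x assume "x \<in> carrier (semidirect \<gamma> l)"
  then obtain a i where "x = (a, i)" "i < l"
    by auto
  define y where "y = (- (\<gamma> ^ ((l - i) mod l) * a), (l - i) mod l)"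
  have "y \<otimes>\<^bsub>semidirect \<gamma> l\<^esub> x = \<one>\<^bsub>semidirect \<gamma> l\<^esub>"
    using \<open>x = (a, i)\<close> \<open>i < l\<close> by (simp add: y_def mod_add_left_eq)
  moreover have "y \<in> carrier (semidirect \<gamma> l)"
    using assms(2) by (simp add: y_def)
  ultimately show "\<exists>y \<in> carrier (semidirect \<gamma> l). y \<otimes>\<^bsub>semidirect \<gamma> l\<^esub> x = \<one>\<^bsub>semidirect \<gamma> l\<^esub>"
    by blast
qed (use assms in auto)

lemma card_semidirect_products:
  fixes \<gamma> :: "'a::field"
  assumes inj: "inj_on (\<lambda>i. \<gamma> ^ i) {0..<l}" and "k < l"
  shows "card {(e, e') \<in> (S \<times> {0..<l}) \<times> (S \<times> {0..<l}). e \<otimes>\<^bsub>semidirect \<gamma> l\<^esub> e' = (w, k)}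
       = card {(s, s', d) \<in> S \<times> S \<times> {\<gamma> ^ i | i. i < l}. s + d * s' = w}"
    (is "card ?P = card ?T")
proof (rule bij_betw_same_card)
  have P: "((s, i), (s', j)) \<in> ?P \<longleftrightarrow>
      s \<in> S \<and> s' \<in> S \<and> i < l \<and> j = (k + (l - i)) mod l \<and> s + \<gamma> ^ i * s' = w" for s s' i j
  proof -
    have "j < l \<and> (i + j) mod l = k \<longleftrightarrow> j = (k + (l - i)) mod l" if "i < l"
      using add_mod_eq_iff[OF that _ \<open>k < l\<close>, of j] \<open>k < l\<close> by auto
    then show ?thesis by auto
  qed
  show "bij_betw (\<lambda>((s, i), (s', j)). (s, s', \<gamma> ^ i)) ?P ?T"
  proof (rule bij_betw_imageI)
    show "inj_on (\<lambda>((s, i), (s', j)). (s, s', \<gamma> ^ i)) ?P"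
    proof (rule inj_onI)
      fix p q assume pq: "p \<in> ?P" "q \<in> ?P"
        "(\<lambda>((s, i), (s', j)). (s, s', \<gamma> ^ i)) p = (\<lambda>((s, i), (s', j)). (s, s', \<gamma> ^ i)) q"
      obtain s i s' j t i' t' j' where p: "p = ((s, i), (s', j))" and q: "q = ((t, i'), (t', j'))"
        by (metis prod.exhaust)
      have "i < l" "i' < l" "j = (k + (l - i)) mod l" "j' = (k + (l - i')) mod l"
        "s = t" "s' = t'" "\<gamma> ^ i = \<gamma> ^ i'"
        using pq unfolding p q P by auto
      then show "p = q"
        using inj_onD[OF inj, of i i'] p q by auto
    qed
    show "(\<lambda>((s, i), (s', j)). (s, s', \<gamma> ^ i)) ` ?P = ?T"
    proof (intro equalityI subsetI)
      fix x assume "x \<in> (\<lambda>((s, i), (s', j)). (s, s', \<gamma> ^ i)) ` ?P"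
      then show "x \<in> ?T" unfolding P by auto
    next
      fix x assume "x \<in> ?T"
      then obtain s s' i where "x = (s, s', \<gamma> ^ i)" "s \<in> S" "s' \<in> S" "i < l" "s + \<gamma> ^ i * s' = w"
        by blast
      then show "x \<in> (\<lambda>((s, i), (s', j)). (s, s', \<gamma> ^ i)) ` ?P"
        by (intro image_eqI[where x = "((s, i), (s', (k + (l - i)) mod l))"]) (auto simp only: P)
    qed
  qed
qed

lemma card_twisted_sum_representations:
  fixes D D' S :: "'a::field set" and u w :: 'a and \<alpha> \<beta> :: int
  assumes fin: "finite D'" "finite D" and "0 \<notin> D"
    and invariant: "\<forall>d\<in>D. (\<lambda>x. d * x) ` D' = D'"
    and S: "S = (\<lambda>x. - u + x) ` D'"
    and differences: "\<forall>y. int (card {(x, d) \<in> D' \<times> D. x - u * d = y}) = \<beta> + \<alpha> * (if y = 0 then 1 else 0)"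
  shows "int (card {(s, s', d) \<in> S \<times> S \<times> D. s + d * s' = w})
       = \<beta> * int (card D') + \<alpha> * (if w \<in> S then 1 else 0)"
proof -
  have mem_S: "t \<in> S \<longleftrightarrow> t + u \<in> D'" for t
    using S by (auto simp: image_iff algebra_simps)
  have cancel: "inverse d * (d * x) = x" "d * (inverse d * x) = x" if "d \<in> D" for d x
  proof -
    have "d \<noteq> 0"
      using that \<open>0 \<notin> D\<close> by auto
    then show "inverse d * (d * x) = x" "d * (inverse d * x) = x"
      by (simp_all add: mult.assoc[symmetric])
  qed
  have scale: "d * x \<in> D'" if "d \<in> D" "x \<in> D'" for d x
  proof -
    have "d * x \<in> (\<lambda>x. d * x) ` D'"
      using that(2) by (rule imageI)
    then show ?thesis
      using invariant that(1) by simp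
  qed
  have unscale: "inverse d * x \<in> D'" if "d \<in> D" "x \<in> D'" for d x
  proof -
    have "x \<in> (\<lambda>x. d * x) ` D'"
      using invariant that by simp
    then show ?thesis
      using that(1) by (auto simp: cancel)
  qed
  define A where "A = {(s, s', d) \<in> S \<times> S \<times> D. s + d * s' = w}"
  define Q where "Q = Sigma D' (\<lambda>x'. {(x, d) \<in> D' \<times> D. x - u * d = w + u - x'})"
  define f where "f = (\<lambda>(s, s', d). (d * (s' + u), s + u, d))"
  define g where "g = (\<lambda>(x', x, d). (x - u, inverse d * x' - u, d))"
  have "bij_betw f A Q"
  proof (rule bij_betw_byWitness[where f' = g])
    show "\<forall>p \<in> A. g (f p) = p"
      by (auto simp: A_def f_def g_def cancel)
    show "\<forall>q \<in> Q. f (g q) = q"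
      by (auto simp: Q_def f_def g_def cancel)
    show "f ` A \<subseteq> Q"
    proof (rule image_subsetI)
      fix p assume "p \<in> A"
      then obtain s s' d where p: "p = (s, s', d)" "s \<in> S" "s' \<in> S" "d \<in> D" and "w = s + d * s'"
        by (auto simp: A_def)
      moreover have "s + u - u * d = s + d * s' + u - d * (s' + u)"
        by (simp add: algebra_simps)
      ultimately show "f p \<in> Q"
        by (simp add: Q_def f_def mem_S scale)
    qed
    show "g ` Q \<subseteq> A"
    proof (rule image_subsetI)
      fix q assume "q \<in> Q"
      then obtain x' x d where q: "q = (x', x, d)" "x' \<in> D'" "x \<in> D'" "d \<in> D" and "w = x - u * d - u + x'"
        by (auto simp: Q_def algebra_simps)
      moreover have "x - u + d * (inverse d * x' - u) = x - u * d - u + x'"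
        using cancel(2)[OF \<open>d \<in> D\<close>] by (simp add: algebra_simps)
      ultimately show "g q \<in> A"
        by (simp add: A_def g_def mem_S unscale)
    qed
  qed
  then have "int (card {(s, s', d) \<in> S \<times> S \<times> D. s + d * s' = w}) = int (card Q)"
    unfolding A_def by (simp add: bij_betw_same_card)
  also have "\<dots> = (\<Sum>x'\<in>D'. int (card {(x, d) \<in> D' \<times> D. x - u * d = w + u - x'}))"
    unfolding Q_def using fin by (subst card_SigmaI) (auto intro: finite_subset[of _ "D' \<times> D"])
  also have "\<dots> = (\<Sum>x'\<in>D'. \<beta> + \<alpha> * (if x' = w + u then 1 else 0))"
    using differences by (intro sum.cong) auto
  also have "\<dots> = \<beta> * int (card D') + \<alpha> * (if w \<in> S then 1 else 0)"
    using fin by (simp add: sum.distrib mem_S mult.commute flip: sum_distrib_left)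
  finally show ?thesis .
qed

theorem lemma4p1:
  fixes \<gamma> u :: "'a::{finite, field}"
    and l :: nat
    and D D' S :: "'a set"
    and E :: "('a \<times> nat) set"
    and s :: nat
    and \<alpha> \<beta> :: int
  assumes "\<gamma> \<noteq> 0"
    and "l = mult_ord \<gamma>"
    and "D = {\<gamma> ^ i | i. i < l}"
    and "\<forall>d\<in>D. (\<lambda>x. d * x) ` D' = D'"
    and "u \<noteq> 0"
    and "S = (\<lambda>x. - u + x) ` D'"
    and "s = card S"
    and "E = S \<times> {0..<l}"
    and "0 \<notin> S"
    and "\<forall>y. int (card {(x, d) \<in> D' \<times> D. x - u * d = y}) = \<beta> + \<alpha> * (if y = 0 then 1 else 0)"
  shows "dsrg (carrier (semidirect \<gamma> l)) (cayley_arc (semidirect \<gamma> l) E)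
           (int (l * card (UNIV :: 'a set))) (int (l * s)) (\<beta> * int s) (\<beta> * int s + \<alpha>) (\<beta> * int s)"
proof -
  let ?G = "semidirect \<gamma> l"
  interpret group ?G
    using semidirect_group mult_ord_pos power_mult_ord assms(1,2) by blast
  have card_D': "card D' = s"
    using assms(6,7) by (simp add: card_image inj_on_def)
  have inj: "inj_on (\<lambda>i. \<gamma> ^ i) {0..<l}"
    using inj_on_power_mult_ord assms(1,2) by simp
  have "0 \<notin> D"
    using assms(1,3) by auto
  have products: "int (card {(e, e') \<in> E \<times> E. e \<otimes>\<^bsub>?G\<^esub> e' = g})
      = (if g = \<one>\<^bsub>?G\<^esub> then \<beta> * int s else if g \<in> E then \<beta> * int s + \<alpha> else \<beta> * int s)"
    if "g \<in> carrier ?G" for g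
  proof -
    obtain w k where g: "g = (w, k)" "k < l"
      using \<open>g \<in> carrier ?G\<close> by auto
    have "card {(e, e') \<in> E \<times> E. e \<otimes>\<^bsub>?G\<^esub> e' = g} = card {(s, s', d) \<in> S \<times> S \<times> D. s + d * s' = w}"
      unfolding assms(3,8) g(1) by (rule card_semidirect_products[OF inj g(2)])
    also have "int \<dots> = \<beta> * int s + \<alpha> * (if w \<in> S then 1 else 0)"
      using card_twisted_sum_representations[OF finite finite \<open>0 \<notin> D\<close> assms(4,6,10)] card_D'
      by simp
    finally show ?thesis
      using g assms(8,9) by auto
  qed
  have "dsrg (carrier ?G) (cayley_arc ?G E) (int (card (carrier ?G))) (int (card E))
      (\<beta> * int s) (\<beta> * int s + \<alpha>) (\<beta> * int s)"
    using assms(8,9) products by (intro dsrg_cayley_digraph) auto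
  then show ?thesis
    using assms(7,8) by (simp add: card_cartesian_product mult.commute)
qed

end
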